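(* Let $\phi_S(t)=t/\sinh t$ (the hyperbolic-sine characteristic function), whose Khintchine pair is $[0,m_S]$ with $m_S(dx)=\frac{|x|}{1+x^2}\frac{1}{1-e^{-\pi|x|}}\cdot e^{-\pi|x|}\cdot\frac{1}{1}\,dx$, i.e. $m_S(dx)=\frac12\frac{|x|}{1+x^2}\frac{e^{-\pi|x|/2}}{\sinh(\pi|x|/2)}dx$. Its free analogue $\tilde\phi_S$ has Voiculescu transform $$V_{\tilde\phi_S}(it)=-it^2\int_0^\infty[\log\sinh s-\log s]e^{-ts}ds=i\big[t\psi(t/2)-t\ln(t/2)+1\big],\qquad t>0.$$
   Context: $\psi=\Gamma'/\Gamma$ denotes the digamma function. For an infinitely divisible characteristic function $\phi$ with Khintchine exponent $\log\phi$ (continuous logarithm, $\log\phi(0)=0$), its free analogue $\tilde\phi$ is the $\boxplus$-infinitely divisible probability measure whose Voiculescu transform satisfies $V_{\tilde\phi}(it)=it^2\int_0^\infty\overline{\log\phi(s)}e^{-ts}ds$, $t>0$; if $\phi$ has Khintchine pair $[0,m]$ with $m$ symmetric, this equals $-it\int_{\mathbb{R}}\frac{1+x^2}{t^2+x^2}m(dx)$. *)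

theory Defs
  imports "HOL-Analysis.Analysis"
begin

text \<open>Voiculescu transform of the free analogue of an infinitely divisible
characteristic function, evaluated at the point i t (t > 0), given the
Khintchine exponent L = log phi (continuous logarithm, L 0 = 0):
  V(i t) = i t^2 * integral over (0,infinity) of conj(L s) e^(-t s) ds.\<close>
definition free_analogue_V_at_it :: "(real \<Rightarrow> complex) \<Rightarrow> real \<Rightarrow> complex" where
  "free_analogue_V_at_it L t =
     \<i> * complex_of_real (t ^ 2) *
       (LINT s:{0<..}|lborel. cnj (L s) * complex_of_real (exp (- t * s)))"

text \<open>Khintchine exponent of the hyperbolic-sine characteristic function
phi_S(s) = s / sinh s (positive real, so the continuous logarithm is ln),
with phi_S(0) = 1.\<close>
definition log_phi_S :: "real \<Rightarrow> complex" where
  "log_phi_S s = (if s = 0 then 0 else complex_of_real (ln (s / sinh s)))"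

end

theory Submission
  imports Defs
begin

text \<open>Since \<open>ln (sinh s) = s - ln 2 + ln (1 - e\<^sup>-\<^sup>2\<^sup>s)\<close>, the Laplace transform of
\<open>ln (sinh s) - ln s\<close> splits into four elementary ones: \<open>s \<mapsto> 1/t\<^sup>2\<close>, \<open>1 \<mapsto> 1/t\<close>,
\<open>ln s \<mapsto> -(\<gamma> + ln t)/t\<close> (which is \<open>\<Gamma>'(1) = -\<gamma>\<close> after rescaling), and
\<open>-ln (1 - e\<^sup>-\<^sup>2\<^sup>s) = \<Sum>\<^sub>n e\<^sup>-\<^sup>2\<^sup>n\<^sup>s/n \<mapsto> \<Sum>\<^sub>n 1/(n(t + 2n)) = (\<psi>(t/2 + 1) + \<gamma>)/t\<close>.
With \<open>\<psi>(t/2 + 1) = \<psi>(t/2) + 2/t\<close> the constants cancel and the transform is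
\<open>(ln (t/2) - \<psi>(t/2))/t - 1/t\<^sup>2\<close>. As \<open>log \<phi>\<^sub>S\<close> is real and equals \<open>ln s - ln (sinh s)\<close>,
multiplying by \<open>-i t\<^sup>2\<close> gives the Voiculescu transform.\<close>

definition has_laplace :: "(real \<Rightarrow> real) \<Rightarrow> real \<Rightarrow> real \<Rightarrow> bool" where
  "has_laplace f t L \<longleftrightarrow>
     has_bochner_integral lborel (\<lambda>s. indicator {0<..} s * (f s * exp (- t * s))) L"

lemma has_laplace_iff_set_integral:
  "has_laplace f t L \<longleftrightarrow>
     set_integrable lborel {0<..} (\<lambda>s. f s * exp (- t * s))
     \<and> (LINT s:{0<..}|lborel. f s * exp (- t * s)) = L"
  by (simp add: has_laplace_def has_bochner_integral_iff set_integrable_def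
      set_lebesgue_integral_def)

lemma has_laplace_eq:
  assumes "has_laplace f t L" and "\<And>s. s > 0 \<Longrightarrow> f s = g s" and "L = M"
  shows "has_laplace g t M"
  using assms(1) unfolding has_laplace_def
  by (rule has_bochner_integral_cong[THEN iffD1, rotated 3]) (auto simp: indicator_def assms(2,3))

lemma has_laplace_add:
  "has_laplace f t A \<Longrightarrow> has_laplace g t B \<Longrightarrow> has_laplace (\<lambda>s. f s + g s) t (A + B)"
  unfolding has_laplace_def by (drule (1) has_bochner_integral_add) (simp add: algebra_simps)

lemma has_laplace_diff:
  "has_laplace f t A \<Longrightarrow> has_laplace g t B \<Longrightarrow> has_laplace (\<lambda>s. f s - g s) t (A - B)"
  unfolding has_laplace_def by (drule (1) has_bochner_integral_diff) (simp add: algebra_simps)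

lemma has_laplace_cmult:
  assumes "has_laplace f t A"
  shows "has_laplace (\<lambda>s. c * f s) t (c * A)"
proof -
  have "has_bochner_integral lborel (\<lambda>s. c * (indicator {0<..} s * (f s * exp (- t * s)))) (c * A)"
    using assms unfolding has_laplace_def by (rule has_bochner_integral_mult_right)
  then show ?thesis by (simp add: has_laplace_def mult_ac)
qed

lemma has_laplace_shift:
  "has_laplace f (t + c) L \<longleftrightarrow> has_laplace (\<lambda>s. exp (- c * s) * f s) t L"
  unfolding has_laplace_def
  by (intro has_bochner_integral_cong) (simp_all add: algebra_simps flip: exp_add)

lemma has_laplace_scale:
  assumes "c > 0" "has_laplace f t L"
  shows "has_laplace (\<lambda>s. f (c * s)) (c * t) (L / c)"
proof -
  have "has_bochner_integral lborel
          (\<lambda>s. indicator {0<..} (0 + c * s) * (f (0 + c * s) * exp (- t * (0 + c * s)))) (L /\<^sub>R \<bar>c\<bar>)"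
    using assms lborel_has_bochner_integral_real_affine_iff[of c
        "\<lambda>s. indicator {0<..} s * (f s * exp (- t * s))" L 0]
    by (simp add: has_laplace_def)
  then show ?thesis
    unfolding has_laplace_def using \<open>c > 0\<close>
    by (simp add: indicator_def zero_less_mult_iff mult_ac divide_inverse)
qed

lemma has_integral_nonneg_imp_has_bochner_integral_lborel:
  fixes f :: "real \<Rightarrow> real"
  assumes "(\<lambda>x. indicator S x * f x) \<in> borel_measurable borel"
    and "\<And>x. x \<in> S \<Longrightarrow> 0 \<le> f x" and "(f has_integral I) S"
  shows "has_bochner_integral lborel (\<lambda>x. indicator S x * f x) I"
proof -
  have "integrable lborel (\<lambda>x. indicator S x * f x)"
    using assms
    by (intro integrableI_nn_integral_finite[OF _ _ nn_integral_has_integral_lebesgue])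
       (auto simp: indicator_def)
  moreover from calculation have "set_integrable lborel S f"
    by (simp add: set_integrable_def)
  then have "(LINT x:S|lborel. f x) = I"
    by (simp add: set_borel_integral_eq_integral(2) integral_unique[OF assms(3)])
  ultimately show ?thesis
    by (simp add: has_bochner_integral_iff set_lebesgue_integral_def)
qed

lemma has_laplace_powr_at_1:
  assumes "a > 0"
  shows "has_laplace (\<lambda>s. s powr (a - 1)) 1 (Gamma a)"
proof -
  have "((\<lambda>s. s powr (a - 1) * exp (- 1 * s)) has_integral Gamma a) {0..}"
    using Gamma_integral_real[OF assms] by (simp add: exp_minus field_simps)
  then have "((\<lambda>s. s powr (a - 1) * exp (- 1 * s)) has_integral Gamma a) {0<..}"
    by (subst has_integral_spike_set_eq[of "{0<..}" "{0..}"])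
       (auto intro!: negligible_subset[OF negligible_empty])
  then show ?thesis
    unfolding has_laplace_def
    by (intro has_integral_nonneg_imp_has_bochner_integral_lborel) auto
qed

lemma has_laplace_powr:
  assumes "a > 0" "t > 0"
  shows "has_laplace (\<lambda>s. s powr (a - 1)) t (Gamma a / t powr a)"
proof -
  have "has_laplace (\<lambda>s. (t * s) powr (a - 1)) t (Gamma a / t)"
    using has_laplace_scale[OF \<open>t > 0\<close> has_laplace_powr_at_1[OF \<open>a > 0\<close>]] by simp
  then have "has_laplace (\<lambda>s. t powr (1 - a) * (t * s) powr (a - 1)) t (t powr (1 - a) * (Gamma a / t))"
    by (rule has_laplace_cmult)
  moreover have "t powr (1 - a) * (t * s) powr (a - 1) = s powr (a - 1)" if "s > 0" for s
    using assms that by (simp add: powr_mult powr_diff field_simps)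
  moreover have "t powr (1 - a) * (Gamma a / t) = Gamma a / t powr a"
    using assms by (simp add: powr_diff field_simps)
  ultimately show ?thesis by (rule has_laplace_eq)
qed

lemma has_laplace_const_1:
  "t > 0 \<Longrightarrow> has_laplace (\<lambda>s. 1) t (1 / t)"
  by (rule has_laplace_eq[OF has_laplace_powr[of 1 t]]) auto

lemma has_laplace_id:
  "t > 0 \<Longrightarrow> has_laplace (\<lambda>s. s) t (1 / t\<^sup>2)"
  by (rule has_laplace_eq[OF has_laplace_powr[of 2 t]]) (auto simp: Gamma_numeral)

lemma has_laplace_dominated_convergence:
  assumes f: "\<And>n. has_laplace (f n) t (L n)" and w: "has_laplace w t W"
    and bound: "\<And>n s. s > 0 \<Longrightarrow> \<bar>f n s\<bar> \<le> w s"
    and lim: "\<And>s. s > 0 \<Longrightarrow> (\<lambda>n. f n s) \<longlonglongrightarrow> g s"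
    and L: "L \<longlonglongrightarrow> M"
  shows "has_laplace g t M"
proof -
  define F where "F = (\<lambda>n s. indicator {0<..} s * (f n s * exp (- t * s)))"
  define G where "G = (\<lambda>s. indicator {0<..} s * (g s * exp (- t * s)))"
  have F: "has_bochner_integral lborel (F n) (L n)" for n
    using f unfolding F_def has_laplace_def .
  then have F_meas: "F n \<in> borel_measurable lborel" for n
    by (auto dest: has_bochner_integral_integrable)
  have F_lim: "(\<lambda>n. F n s) \<longlonglongrightarrow> G s" for s
    by (cases "s > 0") (auto simp: F_def G_def intro: tendsto_mult_right lim)
  have G_meas: "G \<in> borel_measurable lborel"
    by (rule borel_measurable_LIMSEQ_real[OF F_lim F_meas])
  have w_int: "integrable lborel (\<lambda>s. indicator {0<..} s * (w s * exp (- t * s)))"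
    using w by (simp add: has_laplace_def has_bochner_integral_iff)
  have F_bound: "norm (F n s) \<le> indicator {0<..} s * (w s * exp (- t * s))" for n s
    using bound[of s n] by (cases "s > 0") (auto simp: F_def abs_mult)
  note conv = integrable_dominated_convergence[OF G_meas F_meas w_int AE_I2[OF F_lim] AE_I2[OF F_bound]]
    integral_dominated_convergence[OF G_meas F_meas w_int AE_I2[OF F_lim] AE_I2[OF F_bound]]
  have "integral\<^sup>L lborel (F n) = L n" for n
    using F by (simp add: has_bochner_integral_iff)
  with conv(2) L have "integral\<^sup>L lborel G = M"
    using LIMSEQ_unique by auto
  with conv(1) show ?thesis
    unfolding has_laplace_def has_bochner_integral_iff G_def by simp
qed

lemma has_laplace_suminf:
  assumes f: "\<And>n. has_laplace (f n) t (L n)" and nonneg: "\<And>n s. s > 0 \<Longrightarrow> 0 \<le> f n s"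
    and sums: "\<And>s. s > 0 \<Longrightarrow> (\<lambda>n. f n s) sums g s" and L: "L sums M"
  shows "has_laplace g t M"
proof -
  define F where "F = (\<lambda>n s. indicator {0<..} s * (f n s * exp (- t * s)))"
  define G where "G = (\<lambda>s. indicator {0<..} s * (g s * exp (- t * s)))"
  define S where "S = (\<lambda>N s. \<Sum>n<N. F n s)"
  have S: "has_bochner_integral lborel (S N) (\<Sum>n<N. L n)" for N
    unfolding S_def using f by (intro has_bochner_integral_sum) (simp add: F_def has_laplace_def)
  then have S_int: "integrable lborel (S N)" for N
    by (simp add: has_bochner_integral_iff)
  have F_nonneg: "0 \<le> F n s" for n s
    using nonneg[of s n] by (simp add: F_def indicator_def)
  have S_mono: "incseq (\<lambda>N. S N s)" for s
    unfolding S_def by (rule incseq_sumI) (rule F_nonneg)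
  have S_nonneg: "0 \<le> S N s" for N s
    unfolding S_def by (intro sum_nonneg F_nonneg)
  have S_lim: "(\<lambda>N. S N s) \<longlonglongrightarrow> G s" for s
  proof (cases "s > 0")
    case True
    then have "S N s = (\<Sum>n<N. f n s * exp (- t * s))" for N
      unfolding S_def F_def by (intro sum.cong) auto
    then show ?thesis
      using sums_mult2[OF sums[OF True], of "exp (- t * s)"] True
      by (simp add: G_def sums_def)
  qed (simp add: S_def F_def G_def)
  have G_meas: "G \<in> borel_measurable lborel"
    by (rule borel_measurable_LIMSEQ_real[OF S_lim borel_measurable_integrable[OF S_int]])
  have "(\<lambda>N. integral\<^sup>L lborel (S N)) \<longlonglongrightarrow> M"
    using S L by (simp add: has_bochner_integral_iff sums_def)
  note conv = integral_monotone_convergence_nonneg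
    [OF S_int AE_I2[OF S_mono] AE_I2[OF S_nonneg] AE_I2[OF S_lim] this G_meas]
  then show ?thesis
    unfolding has_laplace_def has_bochner_integral_iff G_def by simp
qed

lemma LIMSEQ_difference_quotient:
  fixes f :: "real \<Rightarrow> real"
  assumes "(f has_field_derivative D) (at x)" and "h \<longlonglongrightarrow> 0" and "\<And>n. h n \<noteq> 0"
  shows "(\<lambda>n. (f (x + h n) - f x) / h n) \<longlonglongrightarrow> D"
proof -
  have "filterlim (\<lambda>n. x + h n) (at x) sequentially"
    using tendsto_add[OF tendsto_const assms(2), of x] assms(3) by (intro filterlim_atI) auto
  from filterlim_compose[OF assms(1)[unfolded has_field_derivative_iff] this]
  show ?thesis by simp
qed

lemma abs_exp_minus_one_le:
  fixes y :: real
  shows "\<bar>exp y - 1\<bar> \<le> \<bar>y\<bar> * max 1 (exp y)"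
proof (cases "y \<ge> 0")
  case True
  have "1 - y \<le> exp (- y)" using exp_ge_add_one_self[of "- y"] by simp
  then have "exp y - 1 \<le> y * exp y" by (simp add: exp_minus field_simps)
  with True show ?thesis by (simp add: max_def)
next
  case False
  have "1 + y \<le> exp y" by (rule exp_ge_add_one_self)
  moreover have "exp y \<le> 1" using False by simp
  ultimately have "\<bar>exp y - 1\<bar> \<le> \<bar>y\<bar>" by arith
  also have "\<dots> \<le> \<bar>y\<bar> * max 1 (exp y)" by (simp add: mult_le_cancel_left1)
  finally show ?thesis .
qed

lemma abs_powr_minus_one_div_le:
  fixes x h :: real
  assumes "x > 0" and "0 < h" and "h \<le> 1"
  shows "\<bar>(x powr h - 1) / h\<bar> \<le> \<bar>ln x\<bar> * (1 + x)"
proof -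
  have "x powr h \<le> max 1 x"
  proof (cases "x \<ge> 1")
    case True
    then show ?thesis using powr_mono[of h 1 x] assms by simp
  next
    case False
    then show ?thesis using powr_mono2[of h x 1] assms by simp
  qed
  then have "max 1 (x powr h) \<le> 1 + x" using assms by simp
  have "\<bar>x powr h - 1\<bar> \<le> h * \<bar>ln x\<bar> * max 1 (x powr h)"
    using abs_exp_minus_one_le[of "h * ln x"] assms by (simp add: powr_def abs_mult)
  also have "\<dots> \<le> h * \<bar>ln x\<bar> * (1 + x)"
    using \<open>max 1 (x powr h) \<le> 1 + x\<close> assms by (intro mult_left_mono) auto
  finally have "\<bar>x powr h - 1\<bar> \<le> h * (\<bar>ln x\<bar> * (1 + x))" by (simp add: mult_ac)
  then show ?thesis using assms by (simp add: abs_divide divide_le_eq mult.commute)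
qed

lemma abs_ln_le:
  fixes x :: real
  assumes "x > 0"
  shows "\<bar>ln x\<bar> \<le> 2 * x powr (-1/2) + x"
proof (cases "x \<ge> 1")
  case True
  then show ?thesis using ln_le_minus_one[of x] by (simp add: add_increasing)
next
  case False
  have "- ln x / 2 = ln (x powr (-1/2))" using assms by (simp add: ln_powr)
  also have "\<dots> \<le> x powr (-1/2) - 1" using assms by (intro ln_le_minus_one) simp
  finally show ?thesis using False assms by simp
qed

text \<open>Differentiate \<open>\<Gamma>(a) = \<integral>\<^sub>0\<^sup>\<infinity> s\<^sup>a\<^sup>-\<^sup>1 e\<^sup>-\<^sup>s ds\<close> at \<open>a = 1\<close> under the integral sign:
the difference quotients \<open>(s\<^sup>h - 1)/h\<close>, \<open>0 < h \<le> 1\<close>, are dominated by a sum of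
Gamma integrands and tend to \<open>ln s\<close>, while their integrals tend to \<open>\<Gamma>'(1) = -\<gamma>\<close>.\<close>
lemma has_laplace_ln_at_1: "has_laplace ln 1 (- euler_mascheroni)"
proof -
  define h :: "nat \<Rightarrow> real" where "h n = inverse (real (Suc n))" for n
  have h: "0 < h n" "h n \<le> 1" for n
    by (auto simp: h_def field_simps)
  have h_lim: "h \<longlonglongrightarrow> 0"
    unfolding h_def by (rule LIMSEQ_inverse_real_of_nat)
  define q where "q = (\<lambda>n s. (s powr h n - 1) / h n)"
  define W where "W = (\<lambda>s::real. 2 * s powr (1/2 - 1) + 2 * s powr (3/2 - 1)
                                   + s powr (2 - 1) + s powr (3 - 1))"
  have q: "has_laplace (q n) 1 ((Gamma (1 + h n) - Gamma 1) / h n)" for n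
  proof -
    have "0 < 1 + h n" using h(1)[of n] by simp
    then have "has_laplace (\<lambda>s. inverse (h n) * (s powr ((1 + h n) - 1) - s powr (1 - 1))) 1
                 (inverse (h n) * (Gamma (1 + h n) - Gamma 1))"
      by (intro has_laplace_cmult has_laplace_diff has_laplace_powr_at_1) auto
    then show ?thesis
      by (rule has_laplace_eq) (auto simp: q_def field_simps)
  qed
  have W: "has_laplace W 1 (2 * Gamma (1/2) + 2 * Gamma (3/2) + Gamma 2 + Gamma 3)"
    unfolding W_def by (intro has_laplace_add has_laplace_cmult has_laplace_powr_at_1) auto
  have bound: "\<bar>q n s\<bar> \<le> W s" if "s > 0" for n s
  proof -
    have "\<bar>q n s\<bar> \<le> \<bar>ln s\<bar> * (1 + s)"
      unfolding q_def using that h by (rule abs_powr_minus_one_div_le)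
    also have "\<dots> \<le> (2 * s powr (-1/2) + s) * (1 + s)"
      using abs_ln_le[OF that] that by (intro mult_right_mono) auto
    also have "\<dots> = W s"
      using that powr_add[of s "-1/2" 1] by (simp add: W_def algebra_simps power2_eq_square)
    finally show ?thesis .
  qed
  have q_lim: "(\<lambda>n. q n s) \<longlonglongrightarrow> ln s" if "s > 0" for s
  proof -
    have "((\<lambda>y. exp (y * ln s)) has_field_derivative ln s) (at 0)"
      by (auto intro!: derivative_eq_intros)
    from LIMSEQ_difference_quotient[OF this h_lim] h(1)
    show ?thesis using that by (simp add: q_def powr_def less_imp_neq[symmetric])
  qed
  have "(Gamma has_field_derivative Gamma 1 * Digamma 1) (at (1::real))"
    by (rule has_field_derivative_Gamma) (auto simp: nonpos_Ints_def)
  from LIMSEQ_difference_quotient[OF this h_lim] h(1)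
  have "(\<lambda>n. (Gamma (1 + h n) - Gamma 1) / h n) \<longlonglongrightarrow> - euler_mascheroni"
    by (simp add: less_imp_neq[symmetric])
  with q W bound q_lim show ?thesis
    by (rule has_laplace_dominated_convergence)
qed

lemma has_laplace_ln:
  assumes "t > 0"
  shows "has_laplace ln t (- (euler_mascheroni + ln t) / t)"
proof -
  have "has_laplace (\<lambda>s. ln (t * s) - ln t * 1) t (- euler_mascheroni / t - ln t * (1 / t))"
    using has_laplace_scale[OF assms has_laplace_ln_at_1] has_laplace_const_1[OF assms]
    by (intro has_laplace_diff has_laplace_cmult) simp_all
  then show ?thesis
    by (rule has_laplace_eq) (use assms in \<open>auto simp: ln_mult field_simps\<close>)
qed

lemma sums_Digamma_half_plus_1:
  fixes t :: real
  assumes "t > 0"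
  shows "(\<lambda>n. 1 / (real n * (t + 2 * real n))) sums ((Digamma (t/2 + 1) + euler_mascheroni) / t)"
proof -
  define z where "z = t/2 + 1"
  have "z \<noteq> 0" using assms by (simp add: z_def)
  then have "(\<lambda>k. inverse (of_nat (Suc k)) - inverse (z + of_nat k)) sums (Digamma z + euler_mascheroni)"
    using summable_Digamma[of z] by (simp add: Digamma_def summable_sums)
  moreover have "inverse (of_nat (Suc k)) - inverse (z + of_nat k)
                   = t * (1 / (real (Suc k) * (t + 2 * real (Suc k))))" for k
    using assms by (simp add: z_def field_simps)
  ultimately have "(\<lambda>k. t * (1 / (real (Suc k) * (t + 2 * real (Suc k))))) sums (Digamma z + euler_mascheroni)"
    by simp
  from sums_divide[OF this, of t]
  have "(\<lambda>k. 1 / (real (Suc k) * (t + 2 * real (Suc k)))) sums ((Digamma z + euler_mascheroni) / t)"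
    using assms by simp
  then show ?thesis
    by (subst (asm) sums_Suc_iff) (simp add: z_def)
qed

text \<open>For \<open>n = 0\<close> both sides are \<open>0\<close>, by the convention \<open>x / 0 = 0\<close>.\<close>
lemma has_laplace_exp_power:
  assumes "t > 0"
  shows "has_laplace (\<lambda>s. exp (-2 * s) ^ n / real n) t (1 / (real n * (t + 2 * real n)))"
proof -
  have "has_laplace (\<lambda>s. exp (- (2 * real n) * s) * 1) t (1 / (t + 2 * real n))"
    using has_laplace_const_1[of "t + 2 * real n"] assms by (simp add: has_laplace_shift)
  then have "has_laplace (\<lambda>s. inverse (real n) * (exp (- (2 * real n) * s) * 1)) t
               (inverse (real n) * (1 / (t + 2 * real n)))"
    by (rule has_laplace_cmult)
  then show ?thesis
    by (rule has_laplace_eq) (auto simp: field_simps simp flip: exp_of_nat_mult)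
qed

lemma has_laplace_neg_ln_one_minus_exp:
  assumes "t > 0"
  shows "has_laplace (\<lambda>s. - ln (1 - exp (-2 * s))) t ((Digamma (t/2 + 1) + euler_mascheroni) / t)"
proof (rule has_laplace_suminf[OF has_laplace_exp_power[OF assms]])
  show "(\<lambda>n. exp (-2 * s) ^ n / real n) sums - ln (1 - exp (-2 * s))" if "s > 0" for s
  proof -
    have "\<bar>- exp (-2 * s)\<bar> < 1" using that by simp
    from sums_minus[OF ln_series'[OF this]] show ?thesis by simp
  qed
qed (simp_all add: sums_Digamma_half_plus_1[OF assms])

lemma ln_sinh:
  fixes s :: real
  assumes "s > 0"
  shows "ln (sinh s) = s - ln 2 + ln (1 - exp (-2 * s))"
proof -
  have "sinh s = exp s * (1 - exp (-2 * s)) / 2"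
    by (simp add: sinh_def algebra_simps flip: exp_add)
  then have "ln (sinh s) = ln (exp s * (1 - exp (-2 * s)) / 2)"
    by (simp only:)
  also have "\<dots> = s - ln 2 + ln (1 - exp (-2 * s))"
    using assms by (simp add: ln_div ln_mult)
  finally show ?thesis .
qed

lemma has_laplace_ln_sinh_minus_ln:
  assumes "t > 0"
  shows "has_laplace (\<lambda>s. ln (sinh s) - ln s) t ((ln (t / 2) - Digamma (t / 2)) / t - 1 / t\<^sup>2)"
proof -
  have "has_laplace (\<lambda>s. s - ln 2 * 1 - - ln (1 - exp (-2 * s)) - ln s) t
          (1 / t\<^sup>2 - ln 2 * (1 / t) - (Digamma (t/2 + 1) + euler_mascheroni) / t
             - - (euler_mascheroni + ln t) / t)"
    using assms
    by (intro has_laplace_diff has_laplace_cmult has_laplace_id has_laplace_const_1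
        has_laplace_neg_ln_one_minus_exp has_laplace_ln)
  moreover have "Digamma (t/2 + 1) = Digamma (t/2) + 2 / t"
    using assms by (simp add: Digamma_plus1)
  ultimately show ?thesis
    using assms
    by (elim has_laplace_eq) (simp_all add: ln_sinh ln_div field_simps power2_eq_square)
qed

lemma free_analogue_V_at_it_log_phi_S:
  "free_analogue_V_at_it log_phi_S t
     = - \<i> * complex_of_real (t\<^sup>2 * (LINT s:{0<..}|lborel. (ln (sinh s) - ln s) * exp (- t * s)))"
proof -
  have "(LINT s:{0<..}|lborel. cnj (log_phi_S s) * complex_of_real (exp (- t * s)))
          = (LINT s:{0<..}|lborel. complex_of_real (- ((ln (sinh s) - ln s) * exp (- t * s))))"
    by (rule set_lebesgue_integral_cong) (auto simp: log_phi_S_def ln_div algebra_simps)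
  also have "\<dots> = complex_of_real (- (LINT s:{0<..}|lborel. (ln (sinh s) - ln s) * exp (- t * s)))"
    by (subst set_integral_complex_of_real) (simp add: set_lebesgue_integral_def)
  finally show ?thesis
    by (simp add: free_analogue_V_at_it_def)
qed

theorem corollary3:
  fixes t :: real
  assumes "t > 0"
  shows "set_integrable lborel {0<..} (\<lambda>s. (ln (sinh s) - ln s) * exp (- t * s))
    \<and> free_analogue_V_at_it log_phi_S t
        = - \<i> * complex_of_real (t ^ 2 *
            (LINT s:{0<..}|lborel. (ln (sinh s) - ln s) * exp (- t * s)))
    \<and> - \<i> * complex_of_real (t ^ 2 *
            (LINT s:{0<..}|lborel. (ln (sinh s) - ln s) * exp (- t * s)))
        = \<i> * complex_of_real (t * Digamma (t / 2) - t * ln (t / 2) + 1)"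
proof -
  from has_laplace_ln_sinh_minus_ln[OF assms]
  have integrable: "set_integrable lborel {0<..} (\<lambda>s. (ln (sinh s) - ln s) * exp (- t * s))"
    and integral: "(LINT s:{0<..}|lborel. (ln (sinh s) - ln s) * exp (- t * s))
                     = (ln (t / 2) - Digamma (t / 2)) / t - 1 / t\<^sup>2"
    by (simp_all add: has_laplace_iff_set_integral)
  have scaled_integral: "t ^ 2 * (LINT s:{0<..}|lborel. (ln (sinh s) - ln s) * exp (- t * s))
                           = - (t * Digamma (t / 2) - t * ln (t / 2) + 1)"
    unfolding integral using assms by (simp add: field_simps power2_eq_square)
  have "- \<i> * complex_of_real (t ^ 2 *
               (LINT s:{0<..}|lborel. (ln (sinh s) - ln s) * exp (- t * s)))
               = \<i> * complex_of_real (t * Digamma (t / 2) - t * ln (t / 2) + 1)"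
    unfolding scaled_integral by (simp add: algebra_simps)
  with integrable free_analogue_V_at_it_log_phi_S[of t] show ?thesis
    by blast
qed

end
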